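(* Let $\theta\in\mathbb{R}^n$, $\sigma^2>0$, and for $\alpha\ge 0$ let $Y_\alpha\sim N(\theta,(1+\alpha)\sigma^2 I_n)$. Let $f:\mathbb{R}^n\to\mathbb{R}$ be measurable such that, for some $\beta>0$ and integer $k\ge0$, $$\mathbb{E}\big[|f(Y_\beta)|\,\|Y_\beta-\theta\|_2^{2m}\big]<\infty,\qquad m=0,\dots,k.$$ Then the map $\alpha\mapsto\mathbb{E}[f(Y_\alpha)]$ has $k$ continuous derivatives on $[0,\beta)$. *)

theory Defs
  imports "HOL-Probability.Probability"
begin

definition iso_gauss_density :: "real^'n \<Rightarrow> real \<Rightarrow> real^'n \<Rightarrow> real" where
  "iso_gauss_density \<theta> s2 y =
     (2 * pi * s2) powr (- real CARD('n) / 2) * exp (- (norm (y - \<theta>))\<^sup>2 / (2 * s2))"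

definition iso_gauss :: "real^'n \<Rightarrow> real \<Rightarrow> (real^'n) measure" where
  "iso_gauss \<theta> s2 = density lborel (\<lambda>y. ennreal (iso_gauss_density \<theta> s2 y))"

end

theory Submission
  imports Defs
begin

text \<open>
  Write v = (1 + alpha) sigma^2 and r = |y - theta|. Then E f(Y_alpha) is the integral of f
  against (2 pi)^(-n/2) v^(-n/2) exp(-r^2/(2v)), and only this kernel depends on alpha.
  The alpha-derivative of r^(2b) v^(-p) exp(-r^2/(2v)) is a combination of
  r^(2b) v^(-p-1) exp(-r^2/(2v)) and r^(2b+2) v^(-p-2) exp(-r^2/(2v)), so the j-th derivative
  is a finite combination of integrals of f r^(2b) v^(-p) exp(-r^2/(2v)) with b <= j.
  For 0 <= alpha <= beta every such integrand is bounded by a constant times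
  |f| r^(2b) exp(-r^2/(2(1 + beta) sigma^2)), which is integrable by hypothesis when b <= k;
  dominated convergence then justifies differentiating under the integral sign k times
  and yields continuity of each derivative.
\<close>

lemma tendsto_integral_dominated:
  fixes F :: "'b::first_countable_topology \<Rightarrow> 'a \<Rightarrow> real"
  assumes meas: "\<And>t. t \<in> S - {x} \<Longrightarrow> F t \<in> borel_measurable M"
    and L: "L \<in> borel_measurable M" and g: "integrable M g"
    and bound: "\<And>t y. t \<in> S - {x} \<Longrightarrow> y \<in> space M \<Longrightarrow> \<bar>F t y\<bar> \<le> g y"
    and lim: "\<And>y. y \<in> space M \<Longrightarrow> ((\<lambda>t. F t y) \<longlongrightarrow> L y) (at x within S)"
  shows "((\<lambda>t. \<integral>y. F t y \<partial>M) \<longlongrightarrow> (\<integral>y. L y \<partial>M)) (at x within S)"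
proof (subst tendsto_at_iff_sequentially, intro allI impI)
  fix X :: "nat \<Rightarrow> 'b" assume X: "\<forall>i. X i \<in> S - {x}" "X \<longlonglongrightarrow> x"
  then have X_at: "filterlim X (at x within S) sequentially"
    by (auto simp: filterlim_at)
  show "((\<lambda>t. \<integral>y. F t y \<partial>M) \<circ> X) \<longlonglongrightarrow> (\<integral>y. L y \<partial>M)"
    unfolding comp_def
  proof (rule integral_dominated_convergence[where w=g])
    show "AE y in M. (\<lambda>i. F (X i) y) \<longlonglongrightarrow> L y"
      by (intro AE_I2 filterlim_compose[OF lim X_at])
  qed (use meas L g bound X in auto)
qed

lemma continuous_on_integral_dominated:
  fixes F :: "'b::first_countable_topology \<Rightarrow> 'a \<Rightarrow> real"
  assumes "\<And>t. t \<in> S \<Longrightarrow> F t \<in> borel_measurable M" and "integrable M g"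
    and "\<And>t y. t \<in> S \<Longrightarrow> y \<in> space M \<Longrightarrow> \<bar>F t y\<bar> \<le> g y"
    and "\<And>y. y \<in> space M \<Longrightarrow> continuous_on S (\<lambda>t. F t y)"
  shows "continuous_on S (\<lambda>t. \<integral>y. F t y \<partial>M)"
  unfolding continuous_on_def
  by (intro ballI tendsto_integral_dominated[where g=g]) (use assms in \<open>auto simp: continuous_on_def\<close>)

lemma has_real_derivative_integral:
  fixes F F' :: "real \<Rightarrow> 'a \<Rightarrow> real"
  assumes "convex S" and x: "x \<in> S"
    and int: "\<And>t. t \<in> S \<Longrightarrow> integrable M (F t)"
    and F': "\<And>t y. t \<in> S \<Longrightarrow> y \<in> space M \<Longrightarrow> ((\<lambda>t. F t y) has_real_derivative F' t y) (at t within S)"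
    and bound: "\<And>t y. t \<in> S \<Longrightarrow> y \<in> space M \<Longrightarrow> \<bar>F' t y\<bar> \<le> g y"
    and g: "integrable M g" and meas: "F' x \<in> borel_measurable M"
  shows "((\<lambda>t. \<integral>y. F t y \<partial>M) has_real_derivative (\<integral>y. F' x y \<partial>M)) (at x within S)"
proof -
  let ?Q = "\<lambda>t y. (F t y - F x y) / (t - x)"
  have "((\<lambda>t. \<integral>y. ?Q t y \<partial>M) \<longlongrightarrow> (\<integral>y. F' x y \<partial>M)) (at x within S)"
  proof (rule tendsto_integral_dominated[where g=g])
    show "\<bar>?Q t y\<bar> \<le> g y" if "t \<in> S - {x}" "y \<in> space M" for t y
    proof -
      have "\<bar>F t y - F x y\<bar> \<le> g y * \<bar>t - x\<bar>"
        using field_differentiable_bound[OF \<open>convex S\<close>, of "\<lambda>t. F t y" "\<lambda>t. F' t y" "g y" t x]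
          F' bound that x by auto
      then show ?thesis
        using that by (simp add: divide_le_eq)
    qed
    show "((\<lambda>t. ?Q t y) \<longlongrightarrow> F' x y) (at x within S)" if "y \<in> space M" for y
      using F'[OF x that] by (simp add: has_field_derivative_iff)
  qed (use int x g meas in auto)
  moreover have "\<forall>\<^sub>F t in at x within S.
      (\<integral>y. ?Q t y \<partial>M) = ((\<integral>y. F t y \<partial>M) - (\<integral>y. F x y \<partial>M)) / (t - x)"
    using int x by (auto simp: eventually_at_filter)
  ultimately show ?thesis
    unfolding has_field_derivative_iff by (rule Lim_transform_eventually)
qed

definition gauss_kernel :: "real \<Rightarrow> real \<Rightarrow> real \<Rightarrow> real" where
  "gauss_kernel p q v = v powr (- p) * exp (- q / v)"

lemma gauss_kernel_nonneg: "0 \<le> gauss_kernel p q v"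
  by (simp add: gauss_kernel_def)

lemma has_real_derivative_gauss_kernel:
  assumes "0 < v"
  shows "(gauss_kernel p q has_real_derivative
           q * gauss_kernel (p + 2) q v - p * gauss_kernel (p + 1) q v) (at v)"
proof -
  have deriv: "(gauss_kernel p q has_real_derivative
      - p * v powr (- p - 1) * exp (- q / v) + v powr (- p) * (exp (- q / v) * (q / v\<^sup>2))) (at v)"
    unfolding gauss_kernel_def fun_eq_iff
    using assms by (auto intro!: derivative_eq_intros simp: power2_eq_square field_simps)
  have "v powr (- p - 1) = v powr (- p) / v" "gauss_kernel (p + 1) q v = v powr (- p) / v * exp (- q / v)"
    "gauss_kernel (p + 2) q v = v powr (- p) / v\<^sup>2 * exp (- q / v)"
    using assms by (simp_all add: gauss_kernel_def powr_diff flip: diff_conv_add_uminus)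
  then have "- p * v powr (- p - 1) * exp (- q / v) + v powr (- p) * (exp (- q / v) * (q / v\<^sup>2))
      = q * gauss_kernel (p + 2) q v - p * gauss_kernel (p + 1) q v"
    by (simp add: field_simps)
  with deriv show ?thesis
    by simp
qed

lemma gauss_kernel_le:
  assumes "0 < u" "u \<le> v" "v \<le> w" "0 \<le> p" "0 \<le> q"
  shows "gauss_kernel p q v \<le> u powr (- p) * exp (- q / w)"
proof -
  have "q / w \<le> q / v"
    using assms by (intro frac_le) auto
  then show ?thesis
    unfolding gauss_kernel_def using assms by (intro mult_mono powr_mono2') auto
qed

lemma iso_gauss_density_eq:
  fixes \<theta> :: "real^'n"
  assumes "0 < s"
  shows "iso_gauss_density \<theta> s y =
    (2 * pi) powr (- real CARD('n) / 2) * gauss_kernel (real CARD('n) / 2) ((norm (y - \<theta>))\<^sup>2 / 2) s"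
  using assms by (simp add: iso_gauss_density_def gauss_kernel_def powr_mult)

lemma borel_measurable_iso_gauss_density[measurable]: "iso_gauss_density \<theta> s \<in> borel_measurable borel"
  unfolding iso_gauss_density_def by measurable

lemma iso_gauss_density_nonneg: "0 \<le> iso_gauss_density \<theta> s y"
  by (simp add: iso_gauss_density_def)

text \<open>
  A triple (kappa, b, c) encodes kappa times the integral of f r^(2b) v^(-p-c) exp(-r^2/(2v)),
  with p = n/2 and s = sigma^2 (kappa * weighted_moment b c in the locale below), so that
  differentiate_term mirrors has_real_derivative_weighted_moment.
\<close>

definition differentiate_term ::
    "real \<Rightarrow> real \<Rightarrow> real \<times> nat \<times> nat \<Rightarrow> (real \<times> nat \<times> nat) list" where
  "differentiate_term p s = (\<lambda>(\<kappa>, b, c).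
     [(\<kappa> * s / 2, Suc b, Suc (Suc c)), (- \<kappa> * (p + real c) * s, b, Suc c)])"

fun derivative_terms :: "real \<Rightarrow> real \<Rightarrow> nat \<Rightarrow> (real \<times> nat \<times> nat) list" where
  "derivative_terms p s 0 = [((2 * pi) powr (- p), 0, 0)]"
| "derivative_terms p s (Suc j) = concat (map (differentiate_term p s) (derivative_terms p s j))"

lemma derivative_terms_order: "(\<kappa>, b, c) \<in> set (derivative_terms p s j) \<Longrightarrow> b \<le> j"
proof (induction j arbitrary: \<kappa> b c)
  case (Suc j)
  then show ?case
    by (fastforce simp: differentiate_term_def)
qed simp

locale gauss_smoothing =
  fixes \<theta> :: "real^'n" and \<sigma>2 \<beta> :: real and k :: nat and f :: "real^'n \<Rightarrow> real"
  assumes \<sigma>2_pos: "\<sigma>2 > 0" and \<beta>_pos: "\<beta> > 0"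
    and f_measurable[measurable]: "f \<in> borel_measurable lborel"
    and moments_finite: "\<And>m. m \<le> k \<Longrightarrow>
      (\<integral>\<^sup>+ y. ennreal (\<bar>f y\<bar> * (norm (y - \<theta>)) ^ (2 * m)) \<partial>iso_gauss \<theta> ((1 + \<beta>) * \<sigma>2)) < \<infinity>"
begin

definition integrand :: "nat \<Rightarrow> nat \<Rightarrow> real \<Rightarrow> real^'n \<Rightarrow> real" where
  "integrand b c a y = f y * norm (y - \<theta>) ^ (2 * b) *
     gauss_kernel (real CARD('n) / 2 + real c) ((norm (y - \<theta>))\<^sup>2 / 2) ((1 + a) * \<sigma>2)"

definition weighted_moment :: "nat \<Rightarrow> nat \<Rightarrow> real \<Rightarrow> real" where
  "weighted_moment b c a = (\<integral>y. integrand b c a y \<partial>lborel)"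

definition envelope :: "nat \<Rightarrow> real^'n \<Rightarrow> real" where
  "envelope b y =
     \<bar>f y\<bar> * norm (y - \<theta>) ^ (2 * b) * exp (- ((norm (y - \<theta>))\<^sup>2 / 2) / ((1 + \<beta>) * \<sigma>2))"

lemma envelope_nonneg: "0 \<le> envelope b y"
  by (simp add: envelope_def)

lemma integrand_measurable[measurable]: "integrand b c a \<in> borel_measurable lborel"
  unfolding integrand_def gauss_kernel_def by measurable

lemma integrable_envelope:
  assumes "b \<le> k"
  shows "integrable lborel (envelope b)"
proof -
  define s where "s = (1 + \<beta>) * \<sigma>2"
  have s: "0 < s"
    using \<sigma>2_pos \<beta>_pos by (simp add: s_def)
  define C where "C = (2 * pi) powr (- real CARD('n) / 2) * s powr (- real CARD('n) / 2)"
  have C: "0 < C"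
    using s by (simp add: C_def)
  have "integrable (iso_gauss \<theta> s) (\<lambda>y. \<bar>f y\<bar> * norm (y - \<theta>) ^ (2 * b))"
    using moments_finite[OF assms] by (intro integrableI_nonneg) (auto simp: s_def iso_gauss_def)
  then have "integrable lborel (\<lambda>y. iso_gauss_density \<theta> s y * (\<bar>f y\<bar> * norm (y - \<theta>) ^ (2 * b)))"
    unfolding iso_gauss_def by (subst (asm) integrable_density) (auto simp: iso_gauss_density_nonneg)
  then have "integrable lborel (\<lambda>y. inverse C * (iso_gauss_density \<theta> s y * (\<bar>f y\<bar> * norm (y - \<theta>) ^ (2 * b))))"
    by (rule integrable_mult_right)
  moreover have "inverse C * (iso_gauss_density \<theta> s y * (\<bar>f y\<bar> * norm (y - \<theta>) ^ (2 * b))) = envelope b y" for y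
    using C s by (simp add: iso_gauss_density_eq gauss_kernel_def envelope_def C_def s_def field_simps)
  ultimately show ?thesis
    by simp
qed

lemma integrand_bound:
  assumes "0 \<le> a" "a \<le> \<beta>"
  shows "\<bar>integrand b c a y\<bar> \<le> \<sigma>2 powr - (real CARD('n) / 2 + real c) * envelope b y"
proof -
  have "gauss_kernel (real CARD('n) / 2 + real c) ((norm (y - \<theta>))\<^sup>2 / 2) ((1 + a) * \<sigma>2)
      \<le> \<sigma>2 powr - (real CARD('n) / 2 + real c) * exp (- ((norm (y - \<theta>))\<^sup>2 / 2) / ((1 + \<beta>) * \<sigma>2))"
    using assms \<sigma>2_pos by (intro gauss_kernel_le) (auto intro: mult_right_mono)
  then show ?thesis
    by (simp add: integrand_def envelope_def abs_mult gauss_kernel_nonneg mult_left_mono mult_ac)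
qed

lemma integrable_integrand:
  assumes "b \<le> k" "0 \<le> a" "a \<le> \<beta>"
  shows "integrable lborel (integrand b c a)"
proof (rule Bochner_Integration.integrable_bound)
  show "integrable lborel (\<lambda>y. \<sigma>2 powr - (real CARD('n) / 2 + real c) * envelope b y)"
    using integrable_envelope[OF assms(1)] by (rule integrable_mult_right)
  show "AE y in lborel. norm (integrand b c a y) \<le> norm (\<sigma>2 powr - (real CARD('n) / 2 + real c) * envelope b y)"
    using integrand_bound[OF assms(2,3)] by (simp add: envelope_nonneg)
qed simp

lemma has_real_derivative_integrand:
  assumes "-1 < a"
  shows "((\<lambda>a. integrand b c a y) has_real_derivative
    \<sigma>2 / 2 * integrand (Suc b) (Suc (Suc c)) a y - (real CARD('n) / 2 + real c) * \<sigma>2 * integrand b (Suc c) a y) (at a)"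
proof -
  let ?p = "real CARD('n) / 2 + real c" and ?r = "norm (y - \<theta>)"
  have "((\<lambda>a. gauss_kernel ?p (?r\<^sup>2 / 2) ((1 + a) * \<sigma>2)) has_real_derivative
      (?r\<^sup>2 / 2 * gauss_kernel (?p + 2) (?r\<^sup>2 / 2) ((1 + a) * \<sigma>2)
        - ?p * gauss_kernel (?p + 1) (?r\<^sup>2 / 2) ((1 + a) * \<sigma>2)) * \<sigma>2) (at a)"
    using assms \<sigma>2_pos
    by (intro DERIV_chain2[OF has_real_derivative_gauss_kernel]) (auto intro!: derivative_eq_intros)
  from DERIV_cmult[OF this, of "f y * ?r ^ (2 * b)"] show ?thesis
    by (simp add: integrand_def algebra_simps power_add power2_eq_square)
qed

lemma continuous_on_weighted_moment:
  assumes "b \<le> k"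
  shows "continuous_on {0..<\<beta>} (weighted_moment b c)"
  unfolding weighted_moment_def
proof (rule continuous_on_integral_dominated)
  show "integrable lborel (\<lambda>y. \<sigma>2 powr - (real CARD('n) / 2 + real c) * envelope b y)"
    using integrable_envelope[OF assms] by (rule integrable_mult_right)
  show "\<bar>integrand b c t y\<bar> \<le> \<sigma>2 powr - (real CARD('n) / 2 + real c) * envelope b y"
    if "t \<in> {0..<\<beta>}" for t y
    using that by (intro integrand_bound) auto
  show "continuous_on {0..<\<beta>} (\<lambda>t. integrand b c t y)" for y
    by (intro continuous_at_imp_continuous_on ballI DERIV_isCont[OF has_real_derivative_integrand]) auto
qed simp

lemma has_real_derivative_weighted_moment:
  assumes "Suc b \<le> k" and a: "a \<in> {0..<\<beta>}"
  shows "(weighted_moment b c has_real_derivative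
    \<sigma>2 / 2 * weighted_moment (Suc b) (Suc (Suc c)) a
      - (real CARD('n) / 2 + real c) * \<sigma>2 * weighted_moment b (Suc c) a) (at a within {0..<\<beta>})"
proof -
  let ?p = "real CARD('n) / 2 + real c"
  let ?F' = "\<lambda>t y. \<sigma>2 / 2 * integrand (Suc b) (Suc (Suc c)) t y - ?p * \<sigma>2 * integrand b (Suc c) t y"
  let ?g = "\<lambda>y. \<sigma>2 / 2 * (\<sigma>2 powr - (real CARD('n) / 2 + real (Suc (Suc c))) * envelope (Suc b) y)
    + ?p * \<sigma>2 * (\<sigma>2 powr - (real CARD('n) / 2 + real (Suc c)) * envelope b y)"
  have int: "integrable lborel (integrand (Suc b) (Suc (Suc c)) a)" "integrable lborel (integrand b (Suc c) a)"
    using assms by (auto intro!: integrable_integrand)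
  have "((\<lambda>t. \<integral>y. integrand b c t y \<partial>lborel) has_real_derivative (\<integral>y. ?F' a y \<partial>lborel))
      (at a within {0..<\<beta>})"
  proof (rule has_real_derivative_integral)
    show "integrable lborel ?g"
      using assms by (intro Bochner_Integration.integrable_add integrable_mult_right integrable_envelope) auto
    show "\<bar>?F' t y\<bar> \<le> ?g y" if "t \<in> {0..<\<beta>}" for t y
    proof -
      have "\<bar>?F' t y\<bar>
          \<le> \<bar>\<sigma>2 / 2 * integrand (Suc b) (Suc (Suc c)) t y\<bar> + \<bar>?p * \<sigma>2 * integrand b (Suc c) t y\<bar>"
        by (rule abs_triangle_ineq4)
      also have "\<dots>
          = \<sigma>2 / 2 * \<bar>integrand (Suc b) (Suc (Suc c)) t y\<bar> + ?p * \<sigma>2 * \<bar>integrand b (Suc c) t y\<bar>"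
        using \<sigma>2_pos by (simp add: abs_mult)
      also have "\<dots> \<le> ?g y"
        using that \<sigma>2_pos by (intro add_mono mult_left_mono integrand_bound) auto
      finally show ?thesis .
    qed
    show "((\<lambda>t. integrand b c t y) has_real_derivative ?F' t y) (at t within {0..<\<beta>})"
      if "t \<in> {0..<\<beta>}" for t y
      using that by (intro has_field_derivative_at_within[OF has_real_derivative_integrand]) auto
    show "integrable lborel (integrand b c t)" if "t \<in> {0..<\<beta>}" for t
      using that assms by (intro integrable_integrand) auto
    show "?F' a \<in> borel_measurable lborel"
      by measurable
  qed (use a convex_real_interval in auto)
  also have "(\<integral>y. ?F' a y \<partial>lborel) =
      \<sigma>2 / 2 * weighted_moment (Suc b) (Suc (Suc c)) a - ?p * \<sigma>2 * weighted_moment b (Suc c) a"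
    using int by (simp add: weighted_moment_def)
  finally show ?thesis
    unfolding weighted_moment_def .
qed

definition combination :: "(real \<times> nat \<times> nat) list \<Rightarrow> real \<Rightarrow> real" where
  "combination ts a = (\<Sum>(\<kappa>, b, c)\<leftarrow>ts. \<kappa> * weighted_moment b c a)"

lemma has_real_derivative_combination:
  assumes "\<forall>(\<kappa>, b, c) \<in> set ts. b < k" and "a \<in> {0..<\<beta>}"
  shows "(combination ts has_real_derivative
      combination (concat (map (differentiate_term (real CARD('n) / 2) \<sigma>2) ts)) a) (at a within {0..<\<beta>})"
  using assms(1)
proof (induction ts)
  case (Cons t ts)
  obtain \<kappa> b c where t: "t = (\<kappa>, b, c)"
    by (cases t)
  have "((\<lambda>a. \<kappa> * weighted_moment b c a + combination ts a) has_real_derivative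
      \<kappa> * (\<sigma>2 / 2 * weighted_moment (Suc b) (Suc (Suc c)) a
        - (real CARD('n) / 2 + real c) * \<sigma>2 * weighted_moment b (Suc c) a)
      + combination (concat (map (differentiate_term (real CARD('n) / 2) \<sigma>2) ts)) a) (at a within {0..<\<beta>})"
    using Cons assms(2) t
    by (intro DERIV_add DERIV_cmult has_real_derivative_weighted_moment) auto
  then show ?case
    by (simp add: t combination_def differentiate_term_def algebra_simps)
qed (simp add: combination_def[abs_def])

lemma continuous_on_combination:
  assumes "\<forall>(\<kappa>, b, c) \<in> set ts. b \<le> k"
  shows "continuous_on {0..<\<beta>} (combination ts)"
  using assms
proof (induction ts)
  case (Cons t ts)
  obtain \<kappa> b c where t: "t = (\<kappa>, b, c)"
    by (cases t)
  have "continuous_on {0..<\<beta>} (\<lambda>a. \<kappa> * weighted_moment b c a + combination ts a)"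
    using Cons t by (intro continuous_on_add continuous_on_mult_left continuous_on_weighted_moment) auto
  then show ?case
    by (simp add: t combination_def[abs_def])
qed (simp add: combination_def[abs_def])

definition derivative_expansion :: "nat \<Rightarrow> real \<Rightarrow> real" where
  "derivative_expansion j = combination (derivative_terms (real CARD('n) / 2) \<sigma>2 j)"

lemma derivative_expansion_0:
  assumes "0 \<le> a"
  shows "derivative_expansion 0 a = (\<integral>y. f y \<partial>iso_gauss \<theta> ((1 + a) * \<sigma>2))"
proof -
  have "(\<integral>y. f y \<partial>iso_gauss \<theta> ((1 + a) * \<sigma>2)) =
      (\<integral>y. iso_gauss_density \<theta> ((1 + a) * \<sigma>2) y * f y \<partial>lborel)"
    unfolding iso_gauss_def by (simp add: integral_density iso_gauss_density_nonneg)
  also have "\<dots> = (\<integral>y. (2 * pi) powr (- real CARD('n) / 2) * integrand 0 0 a y \<partial>lborel)"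
    using assms \<sigma>2_pos by (simp add: iso_gauss_density_eq integrand_def mult_ac)
  finally show ?thesis
    by (simp add: derivative_expansion_def combination_def weighted_moment_def)
qed

lemma has_real_derivative_derivative_expansion:
  assumes "j < k" and "a \<in> {0..<\<beta>}"
  shows "(derivative_expansion j has_real_derivative derivative_expansion (Suc j) a) (at a within {0..<\<beta>})"
proof -
  have "\<forall>(\<kappa>, b, c) \<in> set (derivative_terms (real CARD('n) / 2) \<sigma>2 j). b < k"
    using assms(1) by (auto dest: derivative_terms_order)
  from has_real_derivative_combination[OF this assms(2)] show ?thesis
    by (simp add: derivative_expansion_def)
qed

lemma continuous_on_derivative_expansion:
  assumes "j \<le> k"
  shows "continuous_on {0..<\<beta>} (derivative_expansion j)"
  unfolding derivative_expansion_def
  using assms by (intro continuous_on_combination) (auto dest: derivative_terms_order)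

end

theorem mainTheorem5:
  fixes \<theta> :: "real^'n" and \<sigma>2 \<beta> :: real and k :: nat and f :: "real^'n \<Rightarrow> real"
  assumes "\<sigma>2 > 0" and "\<beta> > 0"
    and "f \<in> borel_measurable lborel"
    and "\<And>m. m \<le> k \<Longrightarrow>
           (\<integral>\<^sup>+ y. ennreal (\<bar>f y\<bar> * (norm (y - \<theta>)) ^ (2 * m)) \<partial>iso_gauss \<theta> ((1 + \<beta>) * \<sigma>2)) < \<infinity>"
  shows "\<exists>D :: nat \<Rightarrow> real \<Rightarrow> real.
           (\<forall>\<alpha>\<in>{0..<\<beta>}. D 0 \<alpha> = (\<integral>y. f y \<partial>iso_gauss \<theta> ((1 + \<alpha>) * \<sigma>2))) \<and>
           (\<forall>j<k. \<forall>\<alpha>\<in>{0..<\<beta>}. (D j has_real_derivative D (Suc j) \<alpha>) (at \<alpha> within {0..<\<beta>})) \<and>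
           (\<forall>j\<le>k. continuous_on {0..<\<beta>} (D j))"
proof -
  interpret gauss_smoothing \<theta> \<sigma>2 \<beta> k f
    using assms by unfold_locales
  show ?thesis
    by (intro exI[of _ derivative_expansion] conjI ballI allI impI derivative_expansion_0
        has_real_derivative_derivative_expansion continuous_on_derivative_expansion) auto
qed

end
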